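(* Let $D$ be a locatable digraph of order $n$ with $\gamma_{OL}(D)=n$. Let $x$ be an arbitrary vertex of $D$ and let $D'$ be the digraph obtained from $D$ by deleting all non-forcing arcs of $D$ whose tail is $x$. Then $D'$ is locatable and $\gamma_{OL}(D')=n$. Moreover, if $x$ is not location-forced in $D$, then $D$ and $D'$ have the same sets of forcing arcs.
   Context: Digraphs are finite and may contain loops; between two distinct vertices there may be arcs in one or both directions, no repeated arcs. $N^-(v)=\{u: uv\text{ is an arc}\}$ (contains $v$ iff $v$ has a loop). An OLD set of $D$ is a set $S\subseteq V(D)$ such that every vertex has an in-neighbour in $S$ and for every two distinct vertices $u,w$ some vertex of $S$ lies in exactly one of $N^-(u),N^-(w)$. $D$ is locatable if it has an OLD set, and then $\gamma_{OL}(D)$ is the minimum size of an OLD set. A vertex $v$ is location-forced if there are distinct vertices $y,z$ with $N^-(y)\ominus N^-(z)=\{v\}$ ($\ominus$ = symmetric difference). An arc $uy$ (possibly a loop) of a locatable digraph is a forcing arc if either $N^-(y)=\{u\}$, or there is a vertex $z$ with $N^-(z)=N^-(y)\setminus\{u\}$. *)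

theory Defs
  imports Main
begin

text \<open>A digraph is a finite vertex set V together with an arc set A \<subseteq> V \<times> V
  (loops allowed; (u,v) \<in> A means the arc uv from u to v).\<close>

definition digraph :: "'a set \<Rightarrow> ('a \<times> 'a) set \<Rightarrow> bool" where
  "digraph V A \<longleftrightarrow> finite V \<and> A \<subseteq> V \<times> V"

definition in_nbhd :: "'a set \<Rightarrow> ('a \<times> 'a) set \<Rightarrow> 'a \<Rightarrow> 'a set" where
  "in_nbhd V A v = {u \<in> V. (u, v) \<in> A}"

definition symdiff :: "'a set \<Rightarrow> 'a set \<Rightarrow> 'a set" where
  "symdiff X Y = (X - Y) \<union> (Y - X)"

definition is_OLD :: "'a set \<Rightarrow> ('a \<times> 'a) set \<Rightarrow> 'a set \<Rightarrow> bool" where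
  "is_OLD V A S \<longleftrightarrow> S \<subseteq> V
     \<and> (\<forall>v\<in>V. \<exists>u\<in>S. u \<in> in_nbhd V A v)
     \<and> (\<forall>u\<in>V. \<forall>w\<in>V. u \<noteq> w \<longrightarrow> (\<exists>s\<in>S. s \<in> symdiff (in_nbhd V A u) (in_nbhd V A w)))"

definition locatable :: "'a set \<Rightarrow> ('a \<times> 'a) set \<Rightarrow> bool" where
  "locatable V A \<longleftrightarrow> (\<exists>S. is_OLD V A S)"

definition gamma_OL :: "'a set \<Rightarrow> ('a \<times> 'a) set \<Rightarrow> nat" where
  "gamma_OL V A = (LEAST k. \<exists>S. is_OLD V A S \<and> card S = k)"

definition location_forced :: "'a set \<Rightarrow> ('a \<times> 'a) set \<Rightarrow> 'a \<Rightarrow> bool" where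
  "location_forced V A v \<longleftrightarrow>
     (\<exists>y\<in>V. \<exists>z\<in>V. y \<noteq> z \<and> symdiff (in_nbhd V A y) (in_nbhd V A z) = {v})"

definition forcing_arc :: "'a set \<Rightarrow> ('a \<times> 'a) set \<Rightarrow> 'a \<Rightarrow> 'a \<Rightarrow> bool" where
  "forcing_arc V A u y \<longleftrightarrow> (u, y) \<in> A \<and>
     (in_nbhd V A y = {u} \<or> (\<exists>z\<in>V. in_nbhd V A z = in_nbhd V A y - {u}))"

definition forcing_arcs :: "'a set \<Rightarrow> ('a \<times> 'a) set \<Rightarrow> ('a \<times> 'a) set" where
  "forcing_arcs V A = {(u, y). forcing_arc V A u y}"

definition delete_nonforcing_out :: "'a set \<Rightarrow> ('a \<times> 'a) set \<Rightarrow> 'a \<Rightarrow> ('a \<times> 'a) set" where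
  "delete_nonforcing_out V A x = A - {(u, y). u = x \<and> (u, y) \<in> A \<and> \<not> forcing_arc V A u y}"

end

theory Submission
  imports Defs
begin

text \<open>Let N be the in-neighbourhood map and G = {{}} \<union> N(V). A forcing arc uy is exactly
  a removal edge of G labelled u: both N(y) and N(y) - {u} lie in G. Thus gamma_OL(D) = n
  says that N is injective with nonempty values and every vertex labels a removal edge,
  i.e. G is a tight family: card G = n + 1 with all n labels in use. Deleting the
  non-forcing arcs with tail x keeps every contracted member X - {x} in the new family, so
  all removal edges survive and D' is again extremal. If x is not location-forced, the new
  family is the contraction of G by x together with {x}, and a removal edge labelled u of
  it lifts back to G: otherwise, after contracting G by x, the label u would carry two
  distinct removal edges, and the resulting family would be too large for G to be tight.\<close>

definition removal_edge :: "'a set set \<Rightarrow> 'a \<Rightarrow> 'a set \<Rightarrow> bool" where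
  "removal_edge G l X \<longleftrightarrow> X \<in> G \<and> l \<in> X \<and> X - {l} \<in> G"

definition contract :: "'a \<Rightarrow> 'a set set \<Rightarrow> 'a set set" where
  "contract l G = (\<lambda>X. X - {l}) ` G"

definition tight_family :: "'a set \<Rightarrow> 'a set set \<Rightarrow> bool" where
  "tight_family L G \<longleftrightarrow> finite L \<and> finite G \<and> card G = card L + 1
     \<and> (\<forall>l\<in>L. \<exists>X. removal_edge G l X)"

lemma card_contract_add_removal_edges_le:
  assumes "finite G"
  shows "card (contract l G) + card {X. removal_edge G l X} \<le> card G"
proof -
  define E where "E = {X. removal_edge G l X}"
  have "E \<subseteq> G" unfolding E_def removal_edge_def by blast
  have "contract l G \<subseteq> (\<lambda>X. X - {l}) ` (G - E)"
  proof
    fix Y assume "Y \<in> contract l G"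
    then obtain X where X: "X \<in> G" "Y = X - {l}" unfolding contract_def by blast
    show "Y \<in> (\<lambda>X. X - {l}) ` (G - E)"
    proof (cases "X \<in> E")
      case True
      then have "X - {l} \<in> G - E" unfolding E_def removal_edge_def by blast
      then show ?thesis by (rule rev_image_eqI) (use X(2) in blast)
    qed (use X in blast)
  qed
  then have "card (contract l G) \<le> card ((\<lambda>X. X - {l}) ` (G - E))"
    using assms by (intro card_mono) auto
  also have "\<dots> \<le> card (G - E)"
    using assms by (intro card_image_le) auto
  also have "\<dots> = card G - card E"
    using \<open>E \<subseteq> G\<close> assms by (meson card_Diff_subset finite_subset)
  finally show ?thesis
    using card_mono[OF assms \<open>E \<subseteq> G\<close>] unfolding E_def by linarith
qed

lemma card_contract_less:
  assumes "finite G" "removal_edge G l X"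
  shows "card (contract l G) < card G"
proof -
  have "finite {X. removal_edge G l X}"
    using assms(1) by (rule rev_finite_subset) (auto simp: removal_edge_def)
  then have "card {X. removal_edge G l X} > 0"
    using assms(2) card_gt_0_iff by blast
  then show ?thesis using card_contract_add_removal_edges_le[OF assms(1), of l] by linarith
qed

lemma card_contract_add_two_le:
  assumes "finite G" "removal_edge G l X" "removal_edge G l Y" "X \<noteq> Y"
  shows "card (contract l G) + 2 \<le> card G"
proof -
  have "finite {X. removal_edge G l X}"
    using assms(1) by (rule rev_finite_subset) (auto simp: removal_edge_def)
  then have "card {X, Y} \<le> card {X. removal_edge G l X}"
    using assms(2,3) by (intro card_mono) auto
  then show ?thesis
    using card_contract_add_removal_edges_le[OF assms(1), of l] assms(4) by simp
qed

lemma removal_edge_contract: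
  assumes "removal_edge G m X" "m \<noteq> l"
  shows "removal_edge (contract l G) m (X - {l})"
proof -
  have "X - {l} - {m} = (X - {m}) - {l}" by blast
  then show ?thesis using assms unfolding removal_edge_def contract_def by auto
qed

lemma card_less_card_if_removal_edges:
  assumes "finite L" "finite G" "G \<noteq> {}" "\<forall>l\<in>L. \<exists>X. removal_edge G l X"
  shows "card L < card G"
  using assms
proof (induction L arbitrary: G rule: finite_induct)
  case empty
  then show ?case by (simp add: card_gt_0_iff)
next
  case (insert l L)
  have "\<forall>m\<in>L. \<exists>X. removal_edge (contract l G) m X"
    using insert.hyps(2) insert.prems(3) removal_edge_contract by (metis insertCI)
  moreover have "finite (contract l G)" "contract l G \<noteq> {}"
    using insert.prems(1,2) unfolding contract_def by auto
  ultimately have "card L < card (contract l G)" by (rule insert.IH[rotated -1])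
  moreover obtain X where "removal_edge G l X" using insert.prems(3) by auto
  then have "card (contract l G) < card G" by (rule card_contract_less[OF insert.prems(1)])
  ultimately show ?case using insert.hyps by simp
qed

lemma card_add_two_le_if_two_removal_edges:
  assumes "finite L" "finite G" "\<forall>l\<in>L. \<exists>X. removal_edge G l X"
    and "b \<in> L" "removal_edge G b X" "removal_edge G b Y" "X \<noteq> Y"
  shows "card L + 2 \<le> card G"
proof -
  have "\<forall>m\<in>L - {b}. \<exists>X. removal_edge (contract b G) m X"
    using assms(3) removal_edge_contract by (metis DiffE insertCI)
  moreover have "finite (contract b G)" "contract b G \<noteq> {}"
    using assms(2,5) unfolding contract_def removal_edge_def by auto
  ultimately have "card (L - {b}) < card (contract b G)"
    using card_less_card_if_removal_edges assms(1) by blast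
  moreover have "Suc (card (L - {b})) = card L" by (rule card_Suc_Diff1[OF assms(1,4)])
  ultimately show ?thesis using card_contract_add_two_le[OF assms(2,5-7)] by linarith
qed

text \<open>Contracting a costs at least one member of G. Afterwards C - {a} and the image of
  any b-edge of G are two distinct b-edges, which costs one member more than tightness
  allows.\<close>
lemma tight_family_lift_removal:
  assumes tight: "tight_family L G"
    and "a \<in> L" "b \<in> L" "a \<noteq> b" "C \<in> G" "b \<in> C" "C - {b} - {a} \<in> contract a G"
  shows "C - {b} \<in> G \<or> (\<exists>X\<in>G. X \<noteq> C \<and> X - {a} = C - {a})"
proof (rule ccontr)
  assume no_lift: "\<not> ?thesis"
  define G1 where "G1 = contract a G"
  have fin: "finite L" "finite G" "finite G1"
    using tight unfolding tight_family_def G1_def contract_def by auto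
  have labels: "\<forall>l\<in>L. \<exists>X. removal_edge G l X"
    using tight unfolding tight_family_def by simp
  obtain Xa where "removal_edge G a Xa" using labels \<open>a \<in> L\<close> by auto
  then have "card G1 < card G" unfolding G1_def by (rule card_contract_less[OF fin(2)])
  obtain Xb where Xb: "removal_edge G b Xb" using labels \<open>b \<in> L\<close> by auto
  have edge_C: "removal_edge G1 b (C - {a})"
  proof -
    have "C - {a} - {b} = C - {b} - {a}" by blast
    then show ?thesis using assms(4-7) unfolding removal_edge_def G1_def contract_def by auto
  qed
  have edge_Xb: "removal_edge G1 b (Xb - {a})"
    using removal_edge_contract[OF Xb] assms(4) unfolding G1_def by simp
  have "Xb - {a} \<noteq> C - {a}"
  proof
    assume eq: "Xb - {a} = C - {a}"
    have "Xb \<noteq> C" using Xb no_lift unfolding removal_edge_def by blast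
    then show False using eq Xb no_lift unfolding removal_edge_def by blast
  qed
  moreover have "\<forall>m\<in>L - {a}. \<exists>X. removal_edge G1 m X"
    using labels removal_edge_contract unfolding G1_def by (metis DiffE insertCI)
  ultimately have "card (L - {a}) + 2 \<le> card G1"
    using card_add_two_le_if_two_removal_edges[OF _ fin(3) _ _ edge_C edge_Xb] fin(1) assms(3,4)
    by blast
  moreover have "Suc (card (L - {a})) = card L" by (rule card_Suc_Diff1[OF fin(1) assms(2)])
  ultimately show False using \<open>card G1 < card G\<close> tight unfolding tight_family_def by linarith
qed

text \<open>The empty set is included so that the case N(y) = {u} of a forcing arc uy becomes an
  ordinary removal edge.\<close>
definition nbhd_family :: "'a set \<Rightarrow> ('a \<times> 'a) set \<Rightarrow> 'a set set" where
  "nbhd_family V A = insert {} (in_nbhd V A ` V)"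

lemma in_nbhd_subset: "in_nbhd V A y \<subseteq> V"
  unfolding in_nbhd_def by blast

lemma mem_in_nbhd_iff: "digraph V A \<Longrightarrow> u \<in> in_nbhd V A y \<longleftrightarrow> (u, y) \<in> A"
  unfolding in_nbhd_def digraph_def by blast

lemma mem_in_nbhd_head_mem: "digraph V A \<Longrightarrow> u \<in> in_nbhd V A y \<Longrightarrow> y \<in> V"
  unfolding in_nbhd_def digraph_def by blast

lemma forcing_arc_iff_removal_edge:
  assumes "digraph V A"
  shows "forcing_arc V A u y \<longleftrightarrow>
    y \<in> V \<and> removal_edge (nbhd_family V A) u (in_nbhd V A y)"
proof
  assume forcing: "forcing_arc V A u y"
  then have "u \<in> in_nbhd V A y" unfolding forcing_arc_def using mem_in_nbhd_iff[OF assms] by blast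
  moreover from this have "y \<in> V" by (rule mem_in_nbhd_head_mem[OF assms])
  moreover have "in_nbhd V A y - {u} \<in> nbhd_family V A"
    using forcing unfolding forcing_arc_def nbhd_family_def by auto
  ultimately show "y \<in> V \<and> removal_edge (nbhd_family V A) u (in_nbhd V A y)"
    unfolding removal_edge_def nbhd_family_def by blast
next
  assume "y \<in> V \<and> removal_edge (nbhd_family V A) u (in_nbhd V A y)"
  then show "forcing_arc V A u y"
    unfolding removal_edge_def nbhd_family_def forcing_arc_def using mem_in_nbhd_iff[OF assms]
    by (metis Diff_eq_empty_iff image_iff insertE insert_Diff singletonD subset_singletonD)
qed

lemma ex_forcing_arc_iff_removal_edge:
  assumes "digraph V A"
  shows "(\<exists>y. forcing_arc V A v y) \<longleftrightarrow> (\<exists>X. removal_edge (nbhd_family V A) v X)"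
proof
  assume "\<exists>X. removal_edge (nbhd_family V A) v X"
  then obtain X where edge: "removal_edge (nbhd_family V A) v X" by blast
  then obtain y where "y \<in> V" "X = in_nbhd V A y"
    unfolding removal_edge_def nbhd_family_def by auto
  then show "\<exists>y. forcing_arc V A v y" using edge forcing_arc_iff_removal_edge[OF assms] by blast
qed (use forcing_arc_iff_removal_edge[OF assms] in blast)

lemma is_OLD_iff:
  "is_OLD V A S \<longleftrightarrow> S \<subseteq> V \<and> (\<forall>v\<in>V. in_nbhd V A v \<inter> S \<noteq> {})
     \<and> inj_on (\<lambda>v. in_nbhd V A v \<inter> S) V"
proof -
  have sep: "(\<exists>s\<in>S. s \<in> symdiff X Y) \<longleftrightarrow> X \<inter> S \<noteq> Y \<inter> S" for X Y :: "'a set"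
    unfolding symdiff_def by blast
  have dom: "(\<exists>u\<in>S. u \<in> X) \<longleftrightarrow> X \<inter> S \<noteq> {}" for X :: "'a set"
    by blast
  show ?thesis unfolding is_OLD_def inj_on_def sep dom by meson
qed

lemma is_OLD_V_iff:
  "is_OLD V A V \<longleftrightarrow> (\<forall>v\<in>V. in_nbhd V A v \<noteq> {}) \<and> inj_on (in_nbhd V A) V"
  using in_nbhd_subset[of V A] by (simp add: is_OLD_iff Int_absorb2)

lemma is_OLD_mono: "is_OLD V A S \<Longrightarrow> S \<subseteq> T \<Longrightarrow> T \<subseteq> V \<Longrightarrow> is_OLD V A T"
  unfolding is_OLD_def by blast

lemma gamma_OL_le: "is_OLD V A S \<Longrightarrow> gamma_OL V A \<le> card S"
  unfolding gamma_OL_def by (blast intro: Least_le)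

lemma forcing_arc_tail_mem_OLD:
  assumes dg: "digraph V A" and OLD: "is_OLD V A S" and forcing: "forcing_arc V A v y"
  shows "v \<in> S"
proof (rule ccontr)
  assume "v \<notin> S"
  have y: "y \<in> V" "v \<in> in_nbhd V A y" "in_nbhd V A y - {v} \<in> nbhd_family V A"
    using forcing forcing_arc_iff_removal_edge[OF dg] unfolding removal_edge_def by auto
  have dom: "in_nbhd V A y \<inter> S \<noteq> {}" and inj: "inj_on (\<lambda>v. in_nbhd V A v \<inter> S) V"
    using OLD y(1) unfolding is_OLD_iff by auto
  have trace: "(in_nbhd V A y - {v}) \<inter> S = in_nbhd V A y \<inter> S" using \<open>v \<notin> S\<close> by blast
  from y(3) consider "in_nbhd V A y - {v} = {}"
    | z where "z \<in> V" "in_nbhd V A z = in_nbhd V A y - {v}"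
    unfolding nbhd_family_def by auto
  then show False
  proof cases
    case 1
    then show False using dom trace by blast
  next
    case (2 z)
    then have "z = y" using inj y(1) trace by (auto dest: inj_onD)
    then show False using 2 y(2) by blast
  qed
qed

lemma is_OLD_Diff_vertex:
  assumes dg: "digraph V A" and OLD: "is_OLD V A V" and no_arc: "\<forall>y. \<not> forcing_arc V A v y"
  shows "is_OLD V A (V - {v})"
proof -
  let ?N = "in_nbhd V A"
  have no_edge: "\<not> removal_edge (nbhd_family V A) v (?N y)" if "y \<in> V" for y
    using no_arc that forcing_arc_iff_removal_edge[OF dg] by blast
  have trace: "?N y \<inter> (V - {v}) = ?N y - {v}" for y using in_nbhd_subset[of V A y] by blast
  have ne: "?N y \<noteq> {}" if "y \<in> V" for y
    using OLD that unfolding is_OLD_V_iff by auto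
  have inj: "inj_on ?N V" using OLD unfolding is_OLD_V_iff by blast
  have "?N y - {v} \<noteq> {}" if "y \<in> V" for y
  proof
    assume "?N y - {v} = {}"
    then have "?N y = {v}" using ne[OF that] by blast
    then show False using no_edge[OF that] that unfolding removal_edge_def nbhd_family_def by auto
  qed
  moreover have "inj_on (\<lambda>y. ?N y - {v}) V"
  proof (rule inj_onI, rule ccontr)
    fix y z assume yz: "y \<in> V" "z \<in> V" "?N y - {v} = ?N z - {v}" "y \<noteq> z"
    then have "?N y \<noteq> ?N z" using inj by (auto dest: inj_onD)
    then have "(v \<in> ?N y \<and> ?N z = ?N y - {v}) \<or> (v \<in> ?N z \<and> ?N y = ?N z - {v})"
      using yz(3) by blast
    then show False using no_edge yz(1,2) unfolding removal_edge_def nbhd_family_def by auto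
  qed
  ultimately show ?thesis unfolding is_OLD_iff trace by auto
qed

lemma locatable_gamma_OL_eq_card_iff:
  assumes dg: "digraph V A"
  shows "locatable V A \<and> gamma_OL V A = card V \<longleftrightarrow>
    is_OLD V A V \<and> (\<forall>v\<in>V. \<exists>y. forcing_arc V A v y)"
proof
  assume extremal: "locatable V A \<and> gamma_OL V A = card V"
  then obtain S where "is_OLD V A S" unfolding locatable_def by blast
  then have OLD: "is_OLD V A V" using is_OLD_mono unfolding is_OLD_def by blast
  have "\<exists>y. forcing_arc V A v y" if "v \<in> V" for v
  proof (rule ccontr)
    assume "\<nexists>y. forcing_arc V A v y"
    then have "gamma_OL V A \<le> card (V - {v})"
      using is_OLD_Diff_vertex[OF dg OLD] gamma_OL_le by blast
    moreover have "card (V - {v}) < card V"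
      using dg that unfolding digraph_def by (meson card_Diff1_less)
    ultimately show False using extremal by linarith
  qed
  then show "is_OLD V A V \<and> (\<forall>v\<in>V. \<exists>y. forcing_arc V A v y)" using OLD by blast
next
  assume extremal: "is_OLD V A V \<and> (\<forall>v\<in>V. \<exists>y. forcing_arc V A v y)"
  have "S = V" if "is_OLD V A S" for S
    using that extremal forcing_arc_tail_mem_OLD[OF dg that] unfolding is_OLD_def by blast
  then have "gamma_OL V A = card V"
    unfolding gamma_OL_def using extremal by (intro Least_equality) auto
  then show "locatable V A \<and> gamma_OL V A = card V"
    using extremal unfolding locatable_def by blast
qed

lemma digraph_delete_nonforcing_out: "digraph V A \<Longrightarrow> digraph V (delete_nonforcing_out V A x)"
  unfolding digraph_def delete_nonforcing_out_def by blast

lemma in_nbhd_delete_nonforcing_out: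
  "in_nbhd V (delete_nonforcing_out V A x) y =
    (if forcing_arc V A x y then in_nbhd V A y else in_nbhd V A y - {x})"
  unfolding in_nbhd_def delete_nonforcing_out_def by auto

lemma is_OLD_V_delete_nonforcing_out:
  assumes dg: "digraph V A" and OLD: "is_OLD V A V"
  shows "is_OLD V (delete_nonforcing_out V A x) V"
proof -
  let ?N = "in_nbhd V A" and ?N' = "in_nbhd V (delete_nonforcing_out V A x)"
  have forcing: "forcing_arc V A x y"
    if "y \<in> V" "x \<in> ?N y" "?N y - {x} \<in> nbhd_family V A" for y
    using that forcing_arc_iff_removal_edge[OF dg]
    unfolding removal_edge_def nbhd_family_def by blast
  have ne: "?N y \<noteq> {}" if "y \<in> V" for y
    using OLD that unfolding is_OLD_V_iff by auto
  have inj: "inj_on ?N V" using OLD unfolding is_OLD_V_iff by blast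
  have "?N' y \<noteq> {}" if "y \<in> V" for y
  proof (cases "forcing_arc V A x y")
    case True
    then show ?thesis using ne[OF that] unfolding in_nbhd_delete_nonforcing_out by simp
  next
    case False
    then have "?N y \<noteq> {x}" using forcing[OF that] unfolding nbhd_family_def by auto
    then show ?thesis using False ne[OF that] unfolding in_nbhd_delete_nonforcing_out by auto
  qed
  moreover have "inj_on ?N' V"
  proof (rule inj_onI, rule ccontr)
    fix y z assume yz: "y \<in> V" "z \<in> V" "?N' y = ?N' z" "y \<noteq> z"
    have separated: False
      if "y \<in> V" "z \<in> V" "?N' y = ?N' z" "x \<in> ?N y" "?N z = ?N y - {x}" for y z
    proof -
      have "forcing_arc V A x y" using forcing that unfolding nbhd_family_def by auto
      then have "?N' y = ?N y" unfolding in_nbhd_delete_nonforcing_out by simp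
      then show False using that in_nbhd_delete_nonforcing_out[of V A x z] by (auto split: if_splits)
    qed
    have "?N y - {x} = ?N z - {x}"
      using yz(3) unfolding in_nbhd_delete_nonforcing_out by (auto split: if_splits)
    moreover have "?N y \<noteq> ?N z" using inj yz by (auto dest: inj_onD)
    ultimately show False using separated[of y z] separated[of z y] yz by blast
  qed
  ultimately show ?thesis unfolding is_OLD_V_iff by blast
qed

lemma contract_nbhd_family_subset_delete_nonforcing_out:
  assumes dg: "digraph V A"
  shows "contract x (nbhd_family V A) \<subseteq> nbhd_family V (delete_nonforcing_out V A x)"
proof
  let ?N = "in_nbhd V A" and ?N' = "in_nbhd V (delete_nonforcing_out V A x)"
  fix Y assume "Y \<in> contract x (nbhd_family V A)"
  then consider "Y = {}" | y where "y \<in> V" "Y = ?N y - {x}"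
    unfolding contract_def nbhd_family_def by auto
  then show "Y \<in> nbhd_family V (delete_nonforcing_out V A x)"
  proof cases
    case (2 y)
    show ?thesis
    proof (cases "forcing_arc V A x y")
      case True
      then have "?N y - {x} \<in> nbhd_family V A"
        using forcing_arc_iff_removal_edge[OF dg] unfolding removal_edge_def by blast
      then consider "?N y - {x} = {}" | w where "w \<in> V" "?N w = ?N y - {x}"
        unfolding nbhd_family_def by auto
      then show ?thesis
      proof cases
        case (2 w)
        then have "?N' w = ?N w" unfolding in_nbhd_delete_nonforcing_out by auto
        then show ?thesis using 2 \<open>Y = ?N y - {x}\<close> unfolding nbhd_family_def by auto
      qed (simp add: \<open>Y = ?N y - {x}\<close> nbhd_family_def)
    next
      case False
      then show ?thesis using 2 unfolding nbhd_family_def in_nbhd_delete_nonforcing_out by auto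
    qed
  qed (simp add: nbhd_family_def)
qed

lemma removal_edge_delete_nonforcing_out:
  assumes dg: "digraph V A" and edge: "removal_edge (nbhd_family V A) u X"
  shows "removal_edge (nbhd_family V (delete_nonforcing_out V A x)) u
    (if u = x then X else X - {x})"
proof -
  have contracted: "Y - {x} \<in> nbhd_family V (delete_nonforcing_out V A x)"
    if "Y \<in> nbhd_family V A" for Y
    using that contract_nbhd_family_subset_delete_nonforcing_out[OF dg]
    unfolding contract_def by blast
  show ?thesis
  proof (cases "u = x")
    case True
    obtain y where y: "y \<in> V" "X = in_nbhd V A y"
      using edge unfolding removal_edge_def nbhd_family_def by auto
    then have "forcing_arc V A x y" using edge True forcing_arc_iff_removal_edge[OF dg] by blast
    then have "X \<in> nbhd_family V (delete_nonforcing_out V A x)"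
      using y unfolding nbhd_family_def in_nbhd_delete_nonforcing_out by auto
    moreover have "X - {x} - {x} = X - {x}" by blast
    ultimately show ?thesis using True edge contracted unfolding removal_edge_def by metis
  next
    case False
    have "X - {x} - {u} = (X - {u}) - {x}" by blast
    then show ?thesis using False edge contracted unfolding removal_edge_def by auto
  qed
qed

lemma ex_forcing_arc_delete_nonforcing_out:
  assumes "digraph V A" "\<exists>y. forcing_arc V A v y"
  shows "\<exists>y. forcing_arc V (delete_nonforcing_out V A x) v y"
  using assms removal_edge_delete_nonforcing_out ex_forcing_arc_iff_removal_edge
    digraph_delete_nonforcing_out by metis

lemma nbhd_family_eq_off_not_location_forced:
  assumes dg: "digraph V A" and unforced: "\<not> location_forced V A x"
    and "X \<in> nbhd_family V A" "Y \<in> nbhd_family V A" "X \<noteq> Y" "X - {x} = Y - {x}"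
  shows "X \<union> Y \<subseteq> {x}"
proof -
  have "X \<subseteq> {x}" if XY: "X \<in> nbhd_family V A" "Y \<in> nbhd_family V A" "x \<in> X" "Y = X - {x}"
    for X Y
  proof -
    obtain w where w: "w \<in> V" "X = in_nbhd V A w" using XY unfolding nbhd_family_def by auto
    show ?thesis
    proof (rule ccontr)
      assume "\<not> X \<subseteq> {x}"
      then obtain z where z: "z \<in> V" "Y = in_nbhd V A z" using XY unfolding nbhd_family_def by auto
      have "w \<noteq> z" "symdiff (in_nbhd V A w) (in_nbhd V A z) = {x}"
        using w z XY(3,4) unfolding symdiff_def by auto
      then show False using unforced w(1) z(1) unfolding location_forced_def by blast
    qed
  qed
  moreover have "(x \<in> X \<and> Y = X - {x}) \<or> (x \<in> Y \<and> X = Y - {x})" using assms(5,6) by blast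
  ultimately show ?thesis using assms(3,4) by blast
qed

lemma in_nbhd_eq_singleton_if_forcing_arc:
  assumes dg: "digraph V A" and unforced: "\<not> location_forced V A x"
    and forcing: "forcing_arc V A x y"
  shows "in_nbhd V A y = {x}"
proof -
  have "in_nbhd V A y \<in> nbhd_family V A" "in_nbhd V A y - {x} \<in> nbhd_family V A"
    "x \<in> in_nbhd V A y"
    using forcing forcing_arc_iff_removal_edge[OF dg] unfolding removal_edge_def by auto
  then show ?thesis
    using nbhd_family_eq_off_not_location_forced[OF dg unforced] by blast
qed

lemma nbhd_family_delete_nonforcing_out_subset:
  assumes dg: "digraph V A" and unforced: "\<not> location_forced V A x"
  shows "nbhd_family V (delete_nonforcing_out V A x)
    \<subseteq> insert {x} (contract x (nbhd_family V A))"
proof -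
  have "{} \<in> contract x (nbhd_family V A)" unfolding contract_def nbhd_family_def by blast
  moreover have "in_nbhd V A y - {x} \<in> contract x (nbhd_family V A)" if "y \<in> V" for y
    using that unfolding contract_def nbhd_family_def by blast
  ultimately show ?thesis
    using in_nbhd_eq_singleton_if_forcing_arc[OF dg unforced]
    unfolding nbhd_family_def in_nbhd_delete_nonforcing_out by auto
qed

lemma tight_family_nbhd_family:
  assumes dg: "digraph V A" and OLD: "is_OLD V A V" and arcs: "\<forall>v\<in>V. \<exists>y. forcing_arc V A v y"
  shows "tight_family V (nbhd_family V A)"
proof -
  have fin: "finite V" using dg unfolding digraph_def by blast
  have "{} \<notin> in_nbhd V A ` V" "card (in_nbhd V A ` V) = card V"
    using OLD unfolding is_OLD_V_iff by (auto simp: card_image)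
  then have "card (nbhd_family V A) = card V + 1"
    unfolding nbhd_family_def using fin by simp
  then show ?thesis
    using fin arcs ex_forcing_arc_iff_removal_edge[OF dg]
    unfolding tight_family_def nbhd_family_def by auto
qed

lemma forcing_arc_of_forcing_arc_delete_nonforcing_out:
  assumes dg: "digraph V A" and OLD: "is_OLD V A V" and arcs: "\<forall>v\<in>V. \<exists>y. forcing_arc V A v y"
    and unforced: "\<not> location_forced V A x" and "x \<in> V"
    and not_singleton: "in_nbhd V A y \<noteq> {x}"
    and forcing': "forcing_arc V (delete_nonforcing_out V A x) u y"
  shows "forcing_arc V A u y"
proof -
  let ?G = "nbhd_family V A" and ?N = "in_nbhd V A"
  have "\<not> forcing_arc V A x y"
    using not_singleton in_nbhd_eq_singleton_if_forcing_arc[OF dg unforced] by blast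
  then have "removal_edge (nbhd_family V (delete_nonforcing_out V A x)) u (?N y - {x})" "y \<in> V"
    using forcing' forcing_arc_iff_removal_edge[OF digraph_delete_nonforcing_out[OF dg]]
    unfolding in_nbhd_delete_nonforcing_out by auto
  then have u: "u \<noteq> x" "u \<in> ?N y"
    and "?N y - {x} - {u} \<in> insert {x} (contract x ?G)"
    using nbhd_family_delete_nonforcing_out_subset[OF dg unforced]
    unfolding removal_edge_def by auto
  moreover have "?N y \<in> ?G" using \<open>y \<in> V\<close> by (simp add: nbhd_family_def)
  moreover have "u \<in> V" using in_nbhd_subset u(2) by (rule subsetD)
  moreover have "?N y - {x} - {u} = ?N y - {u} - {x}" "?N y - {u} - {x} \<noteq> {x}" by blast+
  ultimately have "?N y - {u} - {x} \<in> contract x ?G" by (metis insertE)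
  then have "?N y - {u} \<in> ?G \<or> (\<exists>X\<in>?G. X \<noteq> ?N y \<and> X - {x} = ?N y - {x})"
    by (rule tight_family_lift_removal[OF tight_family_nbhd_family[OF dg OLD arcs] \<open>x \<in> V\<close>
        \<open>u \<in> V\<close> not_sym[OF u(1)] \<open>?N y \<in> ?G\<close> u(2)])
  moreover have "\<not> ?N y \<subseteq> {x}" using u by blast
  ultimately have "?N y - {u} \<in> ?G"
    using nbhd_family_eq_off_not_location_forced[OF dg unforced _ \<open>?N y \<in> ?G\<close>] by blast
  then show ?thesis
    using u \<open>y \<in> V\<close> \<open>?N y \<in> ?G\<close> forcing_arc_iff_removal_edge[OF dg]
    unfolding removal_edge_def by blast
qed

lemma forcing_arc_delete_nonforcing_out_iff:
  assumes dg: "digraph V A" and OLD: "is_OLD V A V" and arcs: "\<forall>v\<in>V. \<exists>y. forcing_arc V A v y"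
    and unforced: "\<not> location_forced V A x" and "x \<in> V"
  shows "forcing_arc V (delete_nonforcing_out V A x) u y \<longleftrightarrow> forcing_arc V A u y"
proof (cases "in_nbhd V A y = {x}")
  case True
  let ?A' = "delete_nonforcing_out V A x"
  have "y \<in> V" using True mem_in_nbhd_head_mem[OF dg] by blast
  then have G: "{x} \<in> nbhd_family V A" "{} \<in> nbhd_family V A"
    using True unfolding nbhd_family_def by (auto intro: rev_image_eqI)
  then have "forcing_arc V A x y"
    using True \<open>y \<in> V\<close> forcing_arc_iff_removal_edge[OF dg] unfolding removal_edge_def by auto
  then have N': "in_nbhd V ?A' y = {x}" using True unfolding in_nbhd_delete_nonforcing_out by simp
  then have G': "{x} \<in> nbhd_family V ?A'" "{} \<in> nbhd_family V ?A'"
    using \<open>y \<in> V\<close> unfolding nbhd_family_def by (auto intro: rev_image_eqI)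
  show ?thesis
    using True N' G G' \<open>y \<in> V\<close> forcing_arc_iff_removal_edge[OF dg]
      forcing_arc_iff_removal_edge[OF digraph_delete_nonforcing_out[OF dg]]
    unfolding removal_edge_def by auto
next
  case False
  show ?thesis
  proof
    assume forcing: "forcing_arc V A u y"
    have "\<not> forcing_arc V A x y"
      using False in_nbhd_eq_singleton_if_forcing_arc[OF dg unforced] by blast
    moreover from this have "u \<noteq> x" using forcing by blast
    moreover have "y \<in> V" "removal_edge (nbhd_family V A) u (in_nbhd V A y)"
      using forcing forcing_arc_iff_removal_edge[OF dg] by auto
    ultimately show "forcing_arc V (delete_nonforcing_out V A x) u y"
      using removal_edge_delete_nonforcing_out[OF dg, of u "in_nbhd V A y" x]
        forcing_arc_iff_removal_edge[OF digraph_delete_nonforcing_out[OF dg]]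
      unfolding in_nbhd_delete_nonforcing_out by simp
  qed (rule forcing_arc_of_forcing_arc_delete_nonforcing_out[OF assms False])
qed

theorem lemma10:
  fixes V :: "'a set" and A :: "('a \<times> 'a) set" and x :: 'a
  assumes "digraph V A"
    and "locatable V A"
    and "gamma_OL V A = card V"
    and "x \<in> V"
  shows "locatable V (delete_nonforcing_out V A x)
       \<and> gamma_OL V (delete_nonforcing_out V A x) = card V
       \<and> (\<not> location_forced V A x \<longrightarrow>
            forcing_arcs V (delete_nonforcing_out V A x) = forcing_arcs V A)"
proof -
  let ?A' = "delete_nonforcing_out V A x"
  have OLD: "is_OLD V A V" and arcs: "\<forall>v\<in>V. \<exists>y. forcing_arc V A v y"
    using locatable_gamma_OL_eq_card_iff[OF assms(1)] assms(2,3) by auto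
  have "is_OLD V ?A' V" by (rule is_OLD_V_delete_nonforcing_out[OF assms(1) OLD])
  moreover have "\<forall>v\<in>V. \<exists>y. forcing_arc V ?A' v y"
    using arcs ex_forcing_arc_delete_nonforcing_out[OF assms(1)] by blast
  ultimately have "locatable V ?A' \<and> gamma_OL V ?A' = card V"
    using locatable_gamma_OL_eq_card_iff[OF digraph_delete_nonforcing_out[OF assms(1)]] by blast
  moreover have "forcing_arcs V ?A' = forcing_arcs V A" if "\<not> location_forced V A x"
    using forcing_arc_delete_nonforcing_out_iff[OF assms(1) OLD arcs that assms(4)]
    unfolding forcing_arcs_def by blast
  ultimately show ?thesis by blast
qed

end
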